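(* Let $\mu>0$, $\alpha>0$, $f(x)=xe^{-x}$, and let $\beta\in L^\infty_+(0,+\infty)$ satisfy $\int_0^{\infty}\beta(a)e^{-\mu a}\,da=1$. Let $U(t)$ be the semiflow on $L^1_+(0,\infty)$ generated by $\partial_tu+\partial_au=-\mu u$, $u(t,0)=\alpha f(\int_0^\infty\beta(a)u(t,a)\,da)$, $u(0,\cdot)=u_0$. Then $U$ is asymptotically smooth in the sense that for every bounded set $B\subset L^1_+(0,\infty)$, $\lim_{t\to\infty}\kappa(U(t)B)=0$, where $\kappa$ is the Kuratowski measure of non-compactness, $\kappa(B)=\inf\{\varepsilon>0: B$ can be covered by finitely many balls of radius $\le\varepsilon\}$.
   Context: Solutions are in the integrated sense: $u(t,a)=e^{-\mu t}u_0(a-t)$ for $a\ge t$, $u(t,a)=e^{-\mu a}b(t-a)$ for $a\le t$, where $b$ is the continuous solution of $b(t)=\alpha f\big(\int_t^\infty\beta(a)e^{-\mu t}u_0(a-t)\,da+\int_0^t\beta(a)e^{-\mu a}b(t-a)\,da\big)$. *)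

theory Defs
  imports "HOL-Analysis.Analysis"
begin

definition fnl :: "real \<Rightarrow> real" where
  "fnl x = x * exp (- x)"

definition L1p :: "(real \<Rightarrow> real) set" where
  "L1p = {u. set_integrable lborel {0<..} u \<and> (\<forall>a>0. 0 \<le> u a)}"

definition L1dist :: "(real \<Rightarrow> real) \<Rightarrow> (real \<Rightarrow> real) \<Rightarrow> real" where
  "L1dist u v = (LINT a:{0<..}|lborel. \<bar>u a - v a\<bar>)"

definition L1norm :: "(real \<Rightarrow> real) \<Rightarrow> real" where
  "L1norm u = (LINT a:{0<..}|lborel. \<bar>u a\<bar>)"

text \<open>Kuratowski measure of noncompactness in the metric space L^1_+(0,\<infinity>):
  infimum of \<epsilon> > 0 such that B is covered by finitely many closed balls (centred in the space)
  of radius \<epsilon>; it is \<infinity> if no such cover exists.\<close>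
definition kuratowski :: "(real \<Rightarrow> real) set \<Rightarrow> ereal" where
  "kuratowski B = Inf {ereal \<epsilon> | \<epsilon>. \<epsilon> > 0 \<and>
      (\<exists>C. finite C \<and> C \<subseteq> L1p \<and> B \<subseteq> (\<Union>c\<in>C. {u. L1dist u c \<le> \<epsilon>}))}"

text \<open>U is the semiflow of the age-structured model, in the integrated sense.\<close>
definition is_semiflow :: "real \<Rightarrow> real \<Rightarrow> (real \<Rightarrow> real) \<Rightarrow>
    (real \<Rightarrow> (real \<Rightarrow> real) \<Rightarrow> (real \<Rightarrow> real)) \<Rightarrow> bool" where
  "is_semiflow \<mu> \<alpha> \<beta> U \<longleftrightarrow>
     (\<forall>u0\<in>L1p. \<exists>b. continuous_on {0..} b \<and>
        (\<forall>t\<ge>0. b t = \<alpha> * fnl ((LINT a:{t<..}|lborel. \<beta> a * exp (- \<mu> * t) * u0 (a - t))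
                               + (LINT a:{0<..<t}|lborel. \<beta> a * exp (- \<mu> * a) * b (t - a)))) \<and>
        (\<forall>t\<ge>0. \<forall>a>0. U t u0 a =
            (if t \<le> a then exp (- \<mu> * t) * u0 (a - t) else exp (- \<mu> * a) * b (t - a))))"

end

theory Submission
  imports Defs
begin

text \<open>
  For \<open>a < t\<close> the semiflow is \<open>U(t)u\<^sub>0(a) = exp(-\<mu> a) b(t - a)\<close>, where the birth rate
  \<open>b = \<alpha> f(I + J)\<close> takes values in \<open>[0, \<alpha>]\<close> (nonnegativity follows by continuation over short
  time steps, on which the renewal term \<open>J\<close> cannot become too negative); for \<open>a > t\<close> it is the
  transported initial datum, of norm at most \<open>exp(-\<mu> t) \<parallel>u\<^sub>0\<parallel>\<close>. So beyond an age \<open>c\<close> the set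
  \<open>U(t)B\<close> has mass at most \<open>\<alpha> exp(-\<mu> c) / \<mu>\<close> plus a decaying term. On \<open>(0, c)\<close> the birth
  rates are uniformly equicontinuous for large \<open>t\<close>: \<open>f\<close> is 1-Lipschitz on \<open>[0, \<infinity>)\<close>, the initial
  contribution \<open>I\<close> decays like \<open>exp(-\<mu> t)\<close>, and \<open>J\<close> is the convolution of the bounded function
  \<open>b\<close> with the integrable kernel \<open>\<beta>(a) exp(-\<mu> a)\<close>, so its modulus of continuity is that of
  translation of the kernel in \<open>L\<^sup>1\<close>. Sampling \<open>b\<close> on a grid and quantizing its values gives
  finitely many step profiles that cover \<open>U(t)B\<close> up to an error tending to \<open>0\<close>.
\<close>

section \<open>Continuity of translation in \<open>L\<^sup>1\<close>\<close>

lemma integrable_translate: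
  fixes f :: "real \<Rightarrow> real"
  assumes "integrable lborel f"
  shows "integrable lborel (\<lambda>x. f (x + h))"
  using lborel_integrable_real_affine[OF assms, of 1 h] by (simp add: add.commute)

lemma integral_translate:
  fixes f :: "real \<Rightarrow> real"
  shows "(\<integral>x. f (x + h) \<partial>lborel) = (\<integral>x. f x \<partial>lborel)"
  using lborel_integral_real_affine[of 1 f h] by (simp add: add.commute)

definition L1_translation_dist :: "(real \<Rightarrow> real) \<Rightarrow> real \<Rightarrow> real" where
  "L1_translation_dist f h = (\<integral>x. \<bar>f (x + h) - f x\<bar> \<partial>lborel)"

lemma L1_translation_dist_nonneg: "0 \<le> L1_translation_dist f h"
  unfolding L1_translation_dist_def by simp

lemma tendsto_L1_translation_dist_iff:
  "(L1_translation_dist f \<longlongrightarrow> 0) (at 0) \<longleftrightarrow>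
     (\<forall>e>0. \<forall>\<^sub>F h in at 0. L1_translation_dist f h < e)"
  using L1_translation_dist_nonneg
  by (auto simp: order_tendsto_iff intro: always_eventually less_le_trans)

lemma L1_translation_dist_le_approx:
  fixes f g :: "real \<Rightarrow> real"
  assumes f: "integrable lborel f" and g: "integrable lborel g"
  shows "L1_translation_dist f h
           \<le> L1_translation_dist g h + 2 * (\<integral>x. \<bar>f x - g x\<bar> \<partial>lborel)"
proof -
  have fg: "integrable lborel (\<lambda>x. \<bar>f x - g x\<bar>)"
    using f g by auto
  have fg_h: "integrable lborel (\<lambda>x. \<bar>f (x + h) - g (x + h)\<bar>)"
    using integrable_translate[OF fg] .
  have gg: "integrable lborel (\<lambda>x. \<bar>g (x + h) - g x\<bar>)"
    using g by (intro integrable_abs Bochner_Integration.integrable_diff integrable_translate)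
  have "L1_translation_dist f h
      \<le> (\<integral>x. \<bar>f (x + h) - g (x + h)\<bar> + \<bar>g (x + h) - g x\<bar> + \<bar>f x - g x\<bar> \<partial>lborel)"
    unfolding L1_translation_dist_def
    by (rule integral_mono') (auto intro!: fg fg_h gg)
  also have "\<dots> = (\<integral>x. \<bar>f (x + h) - g (x + h)\<bar> \<partial>lborel) + L1_translation_dist g h
      + (\<integral>x. \<bar>f x - g x\<bar> \<partial>lborel)"
    using fg fg_h gg by (simp add: L1_translation_dist_def)
  also have "(\<integral>x. \<bar>f (x + h) - g (x + h)\<bar> \<partial>lborel) = (\<integral>x. \<bar>f x - g x\<bar> \<partial>lborel)"
    by (rule integral_translate)
  finally show ?thesis by simp
qed

lemma tendsto_L1_translation_dist_approx:
  fixes f :: "real \<Rightarrow> real"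
  assumes f: "integrable lborel f"
    and approx: "\<And>e. e > 0 \<Longrightarrow> \<exists>g. integrable lborel g \<and> (\<integral>x. \<bar>f x - g x\<bar> \<partial>lborel) < e
                                   \<and> (L1_translation_dist g \<longlongrightarrow> 0) (at 0)"
  shows "(L1_translation_dist f \<longlongrightarrow> 0) (at 0)"
  unfolding tendsto_L1_translation_dist_iff
proof (intro allI impI)
  fix e :: real assume "e > 0"
  then obtain g where g: "integrable lborel g" "(\<integral>x. \<bar>f x - g x\<bar> \<partial>lborel) < e / 3"
    and g_lim: "(L1_translation_dist g \<longlongrightarrow> 0) (at 0)"
    using approx[of "e / 3"] by auto
  have "\<forall>\<^sub>F h in at 0. L1_translation_dist g h < e / 3"
    using g_lim \<open>e > 0\<close> unfolding tendsto_L1_translation_dist_iff by (simp del: less_divide_eq_numeral1)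
  then show "\<forall>\<^sub>F h in at 0. L1_translation_dist f h < e"
  proof eventually_elim
    case (elim h)
    then show ?case using L1_translation_dist_le_approx[OF f g(1), of h] g(2) by linarith
  qed
qed

lemma tendsto_L1_translation_dist_compact_support:
  fixes g :: "real \<Rightarrow> real"
  assumes cont: "continuous_on UNIV g" and L: "0 \<le> L" and supp: "\<And>x. L < \<bar>x\<bar> \<Longrightarrow> g x = 0"
  shows "(L1_translation_dist g \<longlongrightarrow> 0) (at 0)"
  unfolding tendsto_L1_translation_dist_iff
proof (intro allI impI)
  fix e :: real assume e: "e > 0"
  define S where "S = {-L-2..L+2}"
  define \<eta> where "\<eta> = e / (2 * (2*L+3))"
  have \<eta>: "\<eta> > 0" using e L by (simp add: \<eta>_def)
  have "uniformly_continuous_on S g"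
    by (rule compact_uniformly_continuous) (auto simp: S_def intro: continuous_on_subset[OF cont])
  then obtain d where d: "d > 0"
    and ucont: "\<And>x y. x \<in> S \<Longrightarrow> y \<in> S \<Longrightarrow> dist y x < d \<Longrightarrow> dist (g y) (g x) < \<eta>"
    using \<eta> unfolding uniformly_continuous_on_def by metis
  have "L1_translation_dist g h < e" if h: "\<bar>h\<bar> < min 1 d" for h
  proof -
    have pointwise: "\<bar>g (x + h) - g x\<bar> \<le> \<eta> * indicator {-L-1..L+1} x" for x
    proof (cases "\<bar>x\<bar> \<le> L + 1")
      case True
      then have "x \<in> S" "x + h \<in> S" using h by (auto simp: S_def)
      with ucont h have "\<bar>g (x + h) - g x\<bar> < \<eta>" by (simp add: dist_real_def)
      moreover have "x \<in> {-L-1..L+1}" using True by auto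
      ultimately show ?thesis by simp
    next
      case False
      then have "g x = 0" "g (x + h) = 0" using h by (auto intro!: supp)
      then show ?thesis using False \<eta> by simp
    qed
    have "L1_translation_dist g h \<le> (\<integral>x. \<eta> * indicator {-L-1..L+1} x \<partial>lborel)"
      unfolding L1_translation_dist_def
      by (rule integral_mono') (use pointwise \<eta> L in auto)
    also have "\<dots> = \<eta> * (2*L+2)" using L by simp
    also have "\<dots> < e" using e L by (simp add: \<eta>_def field_simps add_pos_nonneg)
    finally show ?thesis .
  qed
  then show "\<forall>\<^sub>F h in at 0. L1_translation_dist g h < e"
    unfolding eventually_at using d by (auto intro!: exI[of _ "min 1 d"] simp: dist_real_def)
qed

lemma tendsto_L1_translation_dist_limit:
  fixes s :: "nat \<Rightarrow> real \<Rightarrow> real" and f w :: "real \<Rightarrow> real"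
  assumes s: "\<And>n. integrable lborel (s n)" "\<And>n. (L1_translation_dist (s n) \<longlongrightarrow> 0) (at 0)"
    and w: "integrable lborel w"
    and lim: "\<And>x. (\<lambda>n. s n x) \<longlonglongrightarrow> f x" and bound: "\<And>n x. \<bar>s n x\<bar> \<le> w x"
  shows "(L1_translation_dist f \<longlongrightarrow> 0) (at 0)"
proof -
  have [measurable]: "s n \<in> borel_measurable lborel" for n
    using s(1) by auto
  have [measurable]: "f \<in> borel_measurable lborel"
    by (rule borel_measurable_LIMSEQ_real[OF lim]) simp
  have f_bound: "\<bar>f x\<bar> \<le> w x" for x
    using bound by (intro tendsto_le[OF sequentially_bot _ tendsto_rabs[OF lim[of x]]]) auto
  have f: "integrable lborel f"
    by (rule Bochner_Integration.integrable_bound[OF w]) (auto intro!: AE_I2 order_trans[OF f_bound abs_ge_self])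
  have "(\<lambda>n. \<integral>x. \<bar>f x - s n x\<bar> \<partial>lborel) \<longlonglongrightarrow> (\<integral>x. 0 \<partial>(lborel::real measure))"
  proof (rule integral_dominated_convergence[where w="\<lambda>x. 2 * w x"])
    have "(\<lambda>n. \<bar>f x - s n x\<bar>) \<longlonglongrightarrow> \<bar>f x - f x\<bar>" for x
      by (intro tendsto_intros lim)
    then show "AE x in lborel. (\<lambda>n. \<bar>f x - s n x\<bar>) \<longlonglongrightarrow> 0"
      by simp
    show "AE x in lborel. norm \<bar>f x - s n x\<bar> \<le> 2 * w x" for n
    proof (rule AE_I2)
      fix x
      show "norm \<bar>f x - s n x\<bar> \<le> 2 * w x"
        using abs_triangle_ineq4[of "f x" "s n x"] bound[of n x] f_bound[of x] by simp
    qed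
  qed (use w in auto)
  then have L1_lim: "(\<lambda>n. \<integral>x. \<bar>f x - s n x\<bar> \<partial>lborel) \<longlonglongrightarrow> 0"
    by simp
  show ?thesis
  proof (rule tendsto_L1_translation_dist_approx[OF f])
    fix e :: real assume "e > 0"
    then obtain n where "(\<integral>x. \<bar>f x - s n x\<bar> \<partial>lborel) < e"
      using order_tendstoD(2)[OF L1_lim] by (meson eventually_sequentially order.refl)
    then show "\<exists>g. integrable lborel g \<and> (\<integral>x. \<bar>f x - g x\<bar> \<partial>lborel) < e
                 \<and> (L1_translation_dist g \<longlongrightarrow> 0) (at 0)"
      using s by blast
  qed
qed

lemma tendsto_L1_translation_dist_indicator_open:
  assumes U: "open U" "emeasure lborel U < \<infinity>"
  shows "(L1_translation_dist (indicator U :: real \<Rightarrow> real) \<longlongrightarrow> 0) (at 0)"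
proof -
  have U_int: "integrable lborel (indicator U :: real \<Rightarrow> real)"
    using U by (intro integrable_real_indicator) auto
  have "- U \<noteq> {}"
  proof
    assume "- U = {}"
    then have "U = UNIV" by auto
    with U(2) show False by simp
  qed
  define g where
    "g n x = min 1 (real n * infdist x (-U)) * max 0 (min 1 (real n - \<bar>x\<bar>))" for n :: nat and x :: real
  have g_cont: "continuous_on UNIV (g n)" for n
    unfolding g_def by (intro continuous_intros)
  have g_le: "\<bar>g n x\<bar> \<le> indicator U x" for n x
  proof (cases "x \<in> U")
    case True
    then show ?thesis by (simp add: g_def abs_mult infdist_nonneg mult_le_one)
  next
    case False
    then show ?thesis by (simp add: g_def infdist_zero)
  qed
  have g_lim: "(\<lambda>n. g n x) \<longlonglongrightarrow> indicator U x" for x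
  proof (cases "x \<in> U")
    case True
    have pos: "infdist x (-U) > 0"
      using True \<open>- U \<noteq> {}\<close> U(1) by (intro infdist_pos_not_in_closed) auto
    obtain N :: nat where N: "max (1 / infdist x (-U)) (\<bar>x\<bar> + 1) \<le> real N"
      using real_arch_simple by blast
    have "\<forall>\<^sub>F n in sequentially. 1 \<le> real n * infdist x (-U) \<and> 1 \<le> real n - \<bar>x\<bar>"
      unfolding eventually_sequentially
    proof (intro exI allI impI)
      fix n assume "N \<le> n"
      then have "max (1 / infdist x (-U)) (\<bar>x\<bar> + 1) \<le> real n"
        using N of_nat_mono[of N n] by linarith
      then show "1 \<le> real n * infdist x (-U) \<and> 1 \<le> real n - \<bar>x\<bar>"
        using pos by (simp add: field_simps)
    qed
    then have "\<forall>\<^sub>F n in sequentially. g n x = indicator U x"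
      by eventually_elim (use True in \<open>simp add: g_def\<close>)
    then show ?thesis by (rule tendsto_eventually)
  next
    case False
    then show ?thesis by (simp add: g_def infdist_zero)
  qed
  show ?thesis
  proof (rule tendsto_L1_translation_dist_limit[OF _ _ U_int g_lim g_le])
    show "integrable lborel (g n)" for n
      using g_cont[of n] g_le[of n] U_int
      by (intro Bochner_Integration.integrable_bound[OF U_int]) (auto simp: borel_measurable_continuous_onI)
    show "(L1_translation_dist (g n) \<longlongrightarrow> 0) (at 0)" for n
      by (rule tendsto_L1_translation_dist_compact_support[OF g_cont, of "real n"]) (auto simp: g_def)
  qed
qed

lemma tendsto_L1_translation_dist_indicator:
  assumes A[measurable]: "A \<in> sets borel" and A_fin: "emeasure lborel A < \<infinity>"
  shows "(L1_translation_dist (indicator A :: real \<Rightarrow> real) \<longlongrightarrow> 0) (at 0)"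
proof (rule tendsto_L1_translation_dist_approx)
  show "integrable lborel (indicator A :: real \<Rightarrow> real)"
    using A_fin by (intro integrable_real_indicator) auto
  fix e :: real assume e: "e > 0"
  obtain U where U: "open U" "A \<subseteq> U" "emeasure lborel (U - A) < e"
    using outer_regular_lborel[OF A e] by blast
  have [measurable]: "U \<in> sets borel"
    using U(1) by auto
  have UA_fin: "emeasure lborel (U - A) < \<infinity>"
    using order.strict_trans[OF U(3) ennreal_less_top[of e]] by simp
  have "emeasure lborel U \<le> emeasure lborel A + emeasure lborel (U - A)"
    by (rule order_trans[OF emeasure_mono[of U "A \<union> (U - A)"] emeasure_subadditive]) auto
  also have "\<dots> < \<infinity>"
    using A_fin UA_fin by (auto simp: less_top ennreal_add_eq_top)
  finally have U_fin: "emeasure lborel U < \<infinity>" .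
  have "\<bar>indicator A x - indicator U x\<bar> = (indicator (U - A) x :: real)" for x
    using U(2) by (auto simp: indicator_def)
  then have "(\<integral>x. \<bar>indicator A x - indicator U x\<bar> \<partial>lborel) = measure lborel (U - A)"
    by simp
  also have "\<dots> < e"
    using U(3) UA_fin e by (simp add: emeasure_eq_ennreal_measure ennreal_less_iff less_top)
  finally show "\<exists>g. integrable lborel g \<and> (\<integral>x. \<bar>indicator A x - g x\<bar> \<partial>lborel) < e
                 \<and> (L1_translation_dist g \<longlongrightarrow> 0) (at 0)"
    using tendsto_L1_translation_dist_indicator_open[OF U(1) U_fin] U_fin
    by (intro exI[of _ "indicator U"]) (auto intro: integrable_real_indicator)
qed

lemma L1_translation_dist_mult_const:
  "L1_translation_dist (\<lambda>x. f x * c) h = \<bar>c\<bar> * L1_translation_dist f h"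
proof -
  have "(\<lambda>x. \<bar>f (x + h) * c - f x * c\<bar>) = (\<lambda>x. \<bar>c\<bar> * \<bar>f (x + h) - f x\<bar>)"
    by (rule ext) (metis abs_mult left_diff_distrib mult.commute)
  then show ?thesis
    unfolding L1_translation_dist_def by (simp only: integral_mult_right_zero)
qed

lemma L1_translation_dist_add_le:
  fixes f g :: "real \<Rightarrow> real"
  assumes f: "integrable lborel f" and g: "integrable lborel g"
  shows "L1_translation_dist (\<lambda>x. f x + g x) h \<le> L1_translation_dist f h + L1_translation_dist g h"
proof -
  have ff: "integrable lborel (\<lambda>x. \<bar>f (x + h) - f x\<bar>)"
    using f by (intro integrable_abs Bochner_Integration.integrable_diff integrable_translate)
  have gg: "integrable lborel (\<lambda>x. \<bar>g (x + h) - g x\<bar>)"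
    using g by (intro integrable_abs Bochner_Integration.integrable_diff integrable_translate)
  have "L1_translation_dist (\<lambda>x. f x + g x) h
      \<le> (\<integral>x. \<bar>f (x + h) - f x\<bar> + \<bar>g (x + h) - g x\<bar> \<partial>lborel)"
    unfolding L1_translation_dist_def by (rule integral_mono') (use ff gg in auto)
  also have "\<dots> = L1_translation_dist f h + L1_translation_dist g h"
    using ff gg by (simp add: L1_translation_dist_def)
  finally show ?thesis .
qed

theorem tendsto_L1_translation_dist:
  fixes f :: "real \<Rightarrow> real"
  assumes "integrable lborel f"
  shows "(L1_translation_dist f \<longlongrightarrow> 0) (at 0)"
  using assms
proof (induct rule: integrable_induct)
  case (base A c)
  then show ?case
    using tendsto_mult_left[OF tendsto_L1_translation_dist_indicator[of A], of "\<bar>c\<bar>"]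
    by (simp add: L1_translation_dist_mult_const)
next
  case (add f g)
  show ?case
  proof (rule tendsto_sandwich[OF _ _ tendsto_const])
    show "\<forall>\<^sub>F h in at 0. 0 \<le> L1_translation_dist (\<lambda>x. f x + g x) h"
      by (simp add: L1_translation_dist_nonneg)
    show "\<forall>\<^sub>F h in at 0. L1_translation_dist (\<lambda>x. f x + g x) h
            \<le> L1_translation_dist f h + L1_translation_dist g h"
      using add(1,3) by (simp add: L1_translation_dist_add_le)
    show "((\<lambda>h. L1_translation_dist f h + L1_translation_dist g h) \<longlongrightarrow> 0) (at 0)"
      using tendsto_add[OF add(2,4)] by simp
  qed
next
  case (lim f s)
  show ?case
    by (rule tendsto_L1_translation_dist_limit[where s=s and w="\<lambda>x. 2 * \<bar>f x\<bar>"]) (use lim in auto)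
qed

lemma L1_translation_dist_le_small:
  fixes f :: "real \<Rightarrow> real"
  assumes "integrable lborel f" "0 < \<epsilon>"
  obtains \<delta> where "0 < \<delta>" "\<And>d. \<bar>d\<bar> < \<delta> \<Longrightarrow> L1_translation_dist f d \<le> \<epsilon>"
proof -
  have "\<forall>\<^sub>F d in at 0. L1_translation_dist f d < \<epsilon>"
    using tendsto_L1_translation_dist[OF assms(1)] assms(2)
    unfolding tendsto_L1_translation_dist_iff by blast
  then obtain \<delta> where "0 < \<delta>" and \<delta>: "\<And>d. d \<noteq> 0 \<Longrightarrow> \<bar>d\<bar> < \<delta> \<Longrightarrow> L1_translation_dist f d < \<epsilon>"
    unfolding eventually_at by (auto simp: dist_real_def)
  moreover have "L1_translation_dist f d \<le> \<epsilon>" if "\<bar>d\<bar> < \<delta>" for d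
    using \<delta>[of d] that assms(2) by (cases "d = 0") (auto simp: L1_translation_dist_def)
  ultimately show thesis
    using that by blast
qed

lemma integrable_mult_bounded:
  fixes k g :: "'a \<Rightarrow> real"
  assumes k: "integrable M k" and [measurable]: "g \<in> borel_measurable M" and g: "\<And>x. \<bar>g x\<bar> \<le> K"
  shows "integrable M (\<lambda>x. k x * g x)"
proof (rule Bochner_Integration.integrable_bound[where f="\<lambda>x. K * k x"])
  show "integrable M (\<lambda>x. K * k x)"
    using k by simp
  show "(\<lambda>x. k x * g x) \<in> borel_measurable M"
    using k by measurable
  have "\<bar>k x\<bar> * \<bar>g x\<bar> \<le> \<bar>K\<bar> * \<bar>k x\<bar>" for x
    using g[of x] abs_ge_self[of K] by (metis abs_ge_zero mult.commute mult_left_mono order_trans)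
  then show "AE x in M. norm (k x * g x) \<le> norm (K * k x)"
    by (simp add: abs_mult)
qed

lemma convolution_translation_bound:
  fixes k g :: "real \<Rightarrow> real"
  assumes k: "integrable lborel k" and [measurable]: "g \<in> borel_measurable lborel"
    and g_bound: "\<And>x. \<bar>g x\<bar> \<le> K"
  shows "\<bar>(\<integral>a. k a * g (s' - a) \<partial>lborel) - (\<integral>a. k a * g (s - a) \<partial>lborel)\<bar>
           \<le> K * L1_translation_dist k (s' - s)"
proof -
  define d where "d = s' - s"
  have bounded_mult: "integrable lborel (\<lambda>x. k' x * g (s - x))"
    if "integrable lborel k'" for k'
  proof (rule integrable_mult_bounded[OF that])
    show "(\<lambda>x. g (s - x)) \<in> borel_measurable lborel"
      by measurable
    show "\<bar>g (s - x)\<bar> \<le> K" for x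
      by (rule g_bound)
  qed
  have k_d: "integrable lborel (\<lambda>x. k (x + d))"
    using k by (rule integrable_translate)
  have "(\<integral>a. k a * g (s' - a) \<partial>lborel) = (\<integral>x. k (x + d) * g (s' - (x + d)) \<partial>lborel)"
    by (rule integral_translate[symmetric])
  also have "\<dots> = (\<integral>x. k (x + d) * g (s - x) \<partial>lborel)"
    by (simp add: d_def algebra_simps)
  finally have "\<bar>(\<integral>a. k a * g (s' - a) \<partial>lborel) - (\<integral>a. k a * g (s - a) \<partial>lborel)\<bar>
      = \<bar>\<integral>x. (k (x + d) - k x) * g (s - x) \<partial>lborel\<bar>"
    using bounded_mult[OF k_d] bounded_mult[OF k] by (simp add: left_diff_distrib)
  also have "\<dots> \<le> (\<integral>x. \<bar>(k (x + d) - k x) * g (s - x)\<bar> \<partial>lborel)"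
    by (rule integral_abs_bound)
  also have "\<dots> \<le> (\<integral>x. K * \<bar>k (x + d) - k x\<bar> \<partial>lborel)"
  proof (rule integral_mono')
    show "integrable lborel (\<lambda>x. K * \<bar>k (x + d) - k x\<bar>)"
      using k_d k by auto
    show "\<bar>(k (x + d) - k x) * g (s - x)\<bar> \<le> K * \<bar>k (x + d) - k x\<bar>" for x
      using g_bound[of "s - x"] by (simp add: abs_mult) (metis abs_ge_zero mult.commute mult_left_mono)
    show "0 \<le> K * \<bar>k (x + d) - k x\<bar>" for x
      using g_bound[of 0] by simp
  qed
  also have "\<dots> = K * L1_translation_dist k (s' - s)"
    by (simp add: L1_translation_dist_def d_def)
  finally show ?thesis .
qed

lemma fnl_le_one: "fnl x \<le> 1"
proof -
  have "x \<le> exp x"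
    using exp_ge_add_one_self[of x] by linarith
  then have "x * exp (- x) \<le> exp x * exp (- x)"
    by (intro mult_right_mono) auto
  then show ?thesis by (simp add: fnl_def flip: exp_add)
qed

lemma fnl_nonneg: "0 \<le> x \<Longrightarrow> 0 \<le> fnl x"
  by (simp add: fnl_def)

lemma fnl_lower_bound:
  assumes "0 \<le> c" "- c \<le> x"
  shows "- c * exp c \<le> fnl x"
proof (cases "0 \<le> x")
  case True
  have "0 \<le> c * exp c" using assms(1) by simp
  then show ?thesis using fnl_nonneg[OF True] by linarith
next
  case False
  then have "- c * exp c \<le> x * exp c" using assms(2) by (intro mult_right_mono) auto
  also have "\<dots> \<le> x * exp (- x)" using False assms(2) by (intro mult_left_mono_neg) auto
  finally show ?thesis by (simp add: fnl_def)
qed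

lemma fnl_lipschitz:
  assumes "0 \<le> x" "0 \<le> y"
  shows "\<bar>fnl x - fnl y\<bar> \<le> \<bar>x - y\<bar>"
proof -
  have deriv: "(fnl has_field_derivative (1 - z) * exp (- z)) (at z within {0..})" for z
    unfolding fnl_def by (auto intro!: derivative_eq_intros simp: algebra_simps)
  have deriv_bound: "norm ((1 - z) * exp (- z)) \<le> 1" if "z \<in> {0..}" for z :: real
  proof (cases "z \<le> 1")
    case True
    then have "exp (- z) \<le> 1" "0 \<le> 1 - z" "1 - z \<le> 1"
      using that by (auto simp: exp_le_one_iff)
    then show ?thesis by (simp add: abs_mult mult_le_one)
  next
    case False
    then have "norm ((1 - z) * exp (- z)) \<le> z * exp (- z)"
      by (simp add: abs_mult mult_right_mono)
    also have "\<dots> \<le> 1" using fnl_le_one[of z] by (simp add: fnl_def)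
    finally show ?thesis .
  qed
  show ?thesis
    using field_differentiable_bound[OF convex_real_interval(1) deriv deriv_bound, of x y] assms
    by (simp add: real_norm_def)
qed

lemma exp_minus_set_integrable_atLeast:
  fixes \<mu> A :: real
  assumes "0 < \<mu>"
  shows "set_integrable lborel {A..} (\<lambda>x. exp (- \<mu> * x))"
    and "(LINT x:{A..}|lborel. exp (- \<mu> * x)) = exp (- \<mu> * A) / \<mu>"
proof -
  have hk: "((\<lambda>x. exp (- \<mu> * x)) has_integral exp (- \<mu> * A) / \<mu>) {A..}"
    using has_integral_exp_minus_to_infinity[OF assms] .
  have "(\<lambda>x. exp (- \<mu> * x)) absolutely_integrable_on {A..}"
    using hk by (intro nonnegative_absolutely_integrable_1) (auto simp: has_integral_integrable)
  moreover have meas: "(\<lambda>x. indicator {A..} x *\<^sub>R exp (- \<mu> * x)) \<in> borel_measurable lborel"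
    by measurable
  ultimately show si: "set_integrable lborel {A..} (\<lambda>x. exp (- \<mu> * x))"
    using integrable_completion[OF meas[unfolded measurable_lborel1]] by (simp add: set_integrable_def)
  show "(LINT x:{A..}|lborel. exp (- \<mu> * x)) = exp (- \<mu> * A) / \<mu>"
    using set_borel_integral_eq_integral(2)[OF si] hk by (simp add: integral_unique)
qed

lemma tendsto_exp_neg_mult_at_top:
  fixes m :: real
  assumes "0 < m"
  shows "((\<lambda>x. exp (- m * x)) \<longlongrightarrow> 0) at_top"
proof -
  have "filterlim (\<lambda>x. - m * x) at_bot at_top"
    by (rule filterlim_tendsto_neg_mult_at_bot[OF tendsto_const _ filterlim_ident]) (use assms in simp)
  then show ?thesis
    by (rule filterlim_compose[OF exp_at_bot])
qed

lemma kuratowski_nonneg: "0 \<le> kuratowski S"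
  unfolding kuratowski_def by (rule Inf_greatest) auto

lemma kuratowski_le_cover:
  assumes "0 < r" "finite C" "C \<subseteq> L1p" and cover: "\<And>u. u \<in> S \<Longrightarrow> \<exists>c\<in>C. L1dist u c \<le> r"
  shows "kuratowski S \<le> ereal r"
proof -
  have "S \<subseteq> (\<Union>c\<in>C. {u. L1dist u c \<le> r})"
    using cover by blast
  then show ?thesis
    unfolding kuratowski_def using assms(1-3) by (intro Inf_lower) auto
qed

lemma tendsto_kuratowski_zero:
  assumes "\<And>r. 0 < r \<Longrightarrow> \<forall>\<^sub>F t in F. kuratowski (S t) \<le> ereal r"
  shows "((\<lambda>t. kuratowski (S t)) \<longlongrightarrow> 0) F"
proof (rule order_tendstoI)
  fix y :: ereal assume "y < 0"
  then show "\<forall>\<^sub>F t in F. y < kuratowski (S t)"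
    using kuratowski_nonneg by (auto intro: always_eventually less_le_trans)
next
  fix y :: ereal assume "0 < y"
  then obtain r where "0 < ereal r" "ereal r < y"
    using ereal_dense2 by blast
  then show "\<forall>\<^sub>F t in F. kuratowski (S t) < y"
    using assms[of r] by (auto elim: eventually_mono)
qed

lemma grid_index_bounds:
  fixes a h :: real
  assumes "0 < h" "0 \<le> a"
  shows "real (nat \<lfloor>a / h\<rfloor>) * h \<le> a" "a < real (nat \<lfloor>a / h\<rfloor>) * h + h"
    and "a < real N * h \<Longrightarrow> nat \<lfloor>a / h\<rfloor> < N"
proof -
  have j: "real (nat \<lfloor>a / h\<rfloor>) = real_of_int \<lfloor>a / h\<rfloor>"
    using assms by simp
  show lower: "real (nat \<lfloor>a / h\<rfloor>) * h \<le> a"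
    using floor_divide_lower[OF assms(1), of a] j by simp
  show "a < real (nat \<lfloor>a / h\<rfloor>) * h + h"
    using floor_divide_upper[OF assms(1), of a] j by (simp add: algebra_simps)
  show "nat \<lfloor>a / h\<rfloor> < N" if "a < real N * h"
  proof -
    have "real (nat \<lfloor>a / h\<rfloor>) * h < real N * h"
      using lower that by linarith
    then show ?thesis
      using assms(1) by simp
  qed
qed

lemma uniform_grid:
  fixes c \<delta> :: real
  assumes "0 < c" "0 < \<delta>"
  obtains N :: nat and h where "0 < h" "h \<le> \<delta>" "c = real N * h"
proof -
  define N where "N = nat \<lceil>c / \<delta>\<rceil> + 1"
  have "0 < real N" "c / \<delta> \<le> real N"
    unfolding N_def by linarith+
  then show thesis
    using assms by (intro that[of "c / real N" N]) (auto simp: field_simps)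
qed

lemma quantization_error:
  fixes \<eta> x :: real
  assumes "0 < \<eta>" "0 \<le> x"
  shows "\<bar>x - \<eta> * real (nat \<lfloor>x / \<eta>\<rfloor>)\<bar> \<le> \<eta>"
  using grid_index_bounds(1,2)[OF assms] by (simp add: abs_le_iff mult.commute)

lemma quantization_le:
  fixes \<eta> x c :: real
  assumes "0 < \<eta>" "x \<le> c"
  shows "nat \<lfloor>x / \<eta>\<rfloor> \<le> nat \<lceil>c / \<eta>\<rceil>"
proof -
  have "x / \<eta> \<le> c / \<eta>"
    using assms by (simp add: divide_right_mono)
  then show ?thesis by (intro nat_mono) linarith
qed

lemma L1p_nonneg: "u \<in> L1p \<Longrightarrow> 0 < a \<Longrightarrow> 0 \<le> u a"
  by (simp add: L1p_def)

lemma L1p_integrable_abs: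
  assumes "u \<in> L1p"
  shows "integrable lborel (\<lambda>x. indicator {0<..} x * \<bar>u x\<bar>)"
proof -
  have "integrable lborel (\<lambda>x. \<bar>indicator {0<..} x *\<^sub>R u x\<bar>)"
    using assms unfolding L1p_def set_integrable_def by (intro integrable_abs) auto
  then show ?thesis
    by (simp add: abs_mult)
qed

lemma L1norm_eq_integral: "L1norm u = (\<integral>x. indicator {0<..} x * \<bar>u x\<bar> \<partial>lborel)"
  by (simp add: L1norm_def set_lebesgue_integral_def)

lemma L1norm_nonneg: "0 \<le> L1norm u"
  unfolding L1norm_eq_integral by simp

section \<open>The renewal equation\<close>

locale renewal_model =
  fixes \<mu> \<alpha> :: real and \<beta> :: "real \<Rightarrow> real" and M :: real
  assumes mu_pos: "0 < \<mu>" and alpha_pos: "0 < \<alpha>"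
    and beta_measurable [measurable]: "\<beta> \<in> borel_measurable lborel"
    and beta_bounds: "\<And>a. 0 < a \<Longrightarrow> 0 \<le> \<beta> a \<and> \<beta> a \<le> M"
    and beta_normalized: "(LINT a:{0<..}|lborel. \<beta> a * exp (- \<mu> * a)) = 1"
begin

definition birth_kernel :: "real \<Rightarrow> real" where
  "birth_kernel a = indicator {0<..} a * \<beta> a * exp (- \<mu> * a)"

text \<open>
  A birth rate satisfies \<open>b(t) = \<alpha> f(I(t) + J(t))\<close> with \<open>I = initial_term u\<^sub>0\<close>, the contribution
  of the individuals present at time 0, and \<open>J = renewal_term b\<close>, that of those born later.
\<close>

definition initial_term :: "(real \<Rightarrow> real) \<Rightarrow> real \<Rightarrow> real" where
  "initial_term u0 t = (LINT a:{t<..}|lborel. \<beta> a * exp (- \<mu> * t) * u0 (a - t))"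

definition renewal_term :: "(real \<Rightarrow> real) \<Rightarrow> real \<Rightarrow> real" where
  "renewal_term b t = (LINT a:{0<..<t}|lborel. \<beta> a * exp (- \<mu> * a) * b (t - a))"

definition birth_rate :: "(real \<Rightarrow> real) \<Rightarrow> (real \<Rightarrow> real) \<Rightarrow> bool" where
  "birth_rate u0 b \<longleftrightarrow> continuous_on {0..} b \<and>
     (\<forall>t\<ge>0. b t = \<alpha> * fnl (initial_term u0 t + renewal_term b t))"

lemma is_semiflowE:
  assumes "is_semiflow \<mu> \<alpha> \<beta> U" "u0 \<in> L1p"
  obtains b where "birth_rate u0 b"
    and "\<And>t a. 0 \<le> t \<Longrightarrow> 0 < a \<Longrightarrow>
           U t u0 a = (if t \<le> a then exp (- \<mu> * t) * u0 (a - t) else exp (- \<mu> * a) * b (t - a))"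
proof -
  have "\<exists>b. birth_rate u0 b \<and> (\<forall>t\<ge>0. \<forall>a>0. U t u0 a =
          (if t \<le> a then exp (- \<mu> * t) * u0 (a - t) else exp (- \<mu> * a) * b (t - a)))"
    using bspec[OF assms(1)[unfolded is_semiflow_def] assms(2)]
    unfolding birth_rate_def initial_term_def renewal_term_def by (simp only: conj_assoc)
  then obtain b where "birth_rate u0 b" and "\<forall>t\<ge>0. \<forall>a>0. U t u0 a =
          (if t \<le> a then exp (- \<mu> * t) * u0 (a - t) else exp (- \<mu> * a) * b (t - a))"
    by (elim exE conjE)
  then show thesis
    by (intro that) auto
qed

lemma M_nonneg: "0 \<le> M"
  using beta_bounds[of 1] by auto

lemma birth_kernel_nonneg: "0 \<le> birth_kernel a"
  using beta_bounds[of a] by (simp add: birth_kernel_def indicator_def)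

lemma birth_kernel_le: "birth_kernel a \<le> M"
proof (cases "0 < a")
  case True
  have "\<beta> a * exp (- \<mu> * a) \<le> M * 1"
    using beta_bounds[OF True] M_nonneg True mu_pos by (intro mult_mono) auto
  then show ?thesis using True by (simp add: birth_kernel_def)
qed (simp add: birth_kernel_def M_nonneg)

lemma integral_birth_kernel: "(\<integral>a. birth_kernel a \<partial>lborel) = 1"
  using beta_normalized by (simp add: set_lebesgue_integral_def birth_kernel_def mult.assoc)

lemma integrable_birth_kernel: "integrable lborel birth_kernel"
  using integral_birth_kernel not_integrable_integral_eq by fastforce

lemma renewal_term_convolution:
  "renewal_term b s = (\<integral>a. birth_kernel a * (indicator {0<..} (s - a) * b (s - a)) \<partial>lborel)"
proof -
  have "(\<lambda>a. indicator {0<..<s} a *\<^sub>R (\<beta> a * exp (- \<mu> * a) * b (s - a)))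
      = (\<lambda>a. birth_kernel a * (indicator {0<..} (s - a) * b (s - a)))"
    by (rule ext) (simp add: birth_kernel_def indicator_def)
  then show ?thesis
    unfolding renewal_term_def set_lebesgue_integral_def by (rule arg_cong)
qed

lemma initial_term_nonneg:
  assumes "u0 \<in> L1p" "0 \<le> t"
  shows "0 \<le> initial_term u0 t"
  unfolding initial_term_def set_lebesgue_integral_def
  using assms beta_bounds by (intro integral_nonneg_AE AE_I2) (auto simp: indicator_def L1p_nonneg)

lemma initial_term_le:
  assumes u0: "u0 \<in> L1p" and "0 \<le> t"
  shows "initial_term u0 t \<le> M * exp (- \<mu> * t) * L1norm u0"
proof -
  define w where "w x = indicator {0<..} x * \<bar>u0 x\<bar>" for x
  have "initial_term u0 t \<le> (\<integral>a. M * exp (- \<mu> * t) * w (a + - t) \<partial>lborel)"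
    unfolding initial_term_def set_lebesgue_integral_def
  proof (rule integral_mono')
    show "integrable lborel (\<lambda>a. M * exp (- \<mu> * t) * w (a + - t))"
      using integrable_translate[OF L1p_integrable_abs[OF u0], of "- t"] by (simp add: w_def)
    show "0 \<le> M * exp (- \<mu> * t) * w (a + - t)" for a
      using M_nonneg by (simp add: w_def)
    show "indicator {t<..} a *\<^sub>R (\<beta> a * exp (- \<mu> * t) * u0 (a - t)) \<le> M * exp (- \<mu> * t) * w (a + - t)"
      for a
      using beta_bounds[of a] L1p_nonneg[OF u0, of "a - t"] \<open>0 \<le> t\<close> M_nonneg
      by (auto simp: w_def indicator_def intro!: mult_right_mono)
  qed
  also have "\<dots> = M * exp (- \<mu> * t) * L1norm u0"
    using integral_translate[of w "- t"] by (simp add: w_def L1norm_eq_integral)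
  finally show ?thesis .
qed

lemma birth_rate_le: "birth_rate u0 b \<Longrightarrow> 0 \<le> t \<Longrightarrow> b t \<le> \<alpha>"
  unfolding birth_rate_def using fnl_le_one alpha_pos by (simp add: mult_left_le)

lemma renewal_term_lower_bound:
  assumes "0 \<le> m" "0 \<le> \<delta>"
    and before: "\<And>s. 0 < s \<Longrightarrow> s \<le> t - \<delta> \<Longrightarrow> 0 \<le> b s"
    and recent: "\<And>s. 0 < s \<Longrightarrow> t - \<delta> < s \<Longrightarrow> s < t \<Longrightarrow> - m \<le> b s"
  shows "- (M * m * \<delta>) \<le> renewal_term b t"
proof -
  have pointwise: "- (birth_kernel a * (indicator {0<..} (t - a) * b (t - a)))
                     \<le> M * m * indicator {0<..<\<delta>} a" for a
  proof -
    have rhs_nonneg: "0 \<le> M * m * indicator {0<..<\<delta>} a"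
      using M_nonneg \<open>0 \<le> m\<close> by simp
    consider "a \<le> 0 \<or> t - a \<le> 0" | "0 < t - a" "t - a \<le> t - \<delta>" | "0 < a" "0 < t - a" "t - \<delta> < t - a"
      by linarith
    then show ?thesis
    proof cases
      case 1
      then show ?thesis using rhs_nonneg by (auto simp: birth_kernel_def)
    next
      case 2
      then show ?thesis using rhs_nonneg before[of "t - a"] birth_kernel_nonneg[of a] by simp
    next
      case 3
      have "birth_kernel a * (- b (t - a)) \<le> birth_kernel a * m"
        using recent[of "t - a"] 3 birth_kernel_nonneg[of a] by (intro mult_left_mono) auto
      also have "\<dots> \<le> M * m"
        using birth_kernel_le[of a] \<open>0 \<le> m\<close> by (intro mult_right_mono)
      finally show ?thesis using 3 by simp
    qed
  qed
  have "- renewal_term b t = (\<integral>a. - (birth_kernel a * (indicator {0<..} (t - a) * b (t - a))) \<partial>lborel)"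
    by (simp add: renewal_term_convolution)
  also have "\<dots> \<le> (\<integral>a. M * m * indicator {0<..<\<delta>} a \<partial>lborel)"
    by (rule integral_mono') (use pointwise M_nonneg assms(1,2) in auto)
  also have "\<dots> = M * m * \<delta>"
    using \<open>0 \<le> \<delta>\<close> by simp
  finally show ?thesis by simp
qed

text \<open>
  If \<open>b\<close> is nonnegative up to \<open>T - \<delta>\<close>, a negative minimum \<open>-m\<close> of \<open>b\<close> on \<open>[0, T]\<close> would give
  \<open>J \<ge> -M m \<delta>\<close> and hence \<open>-m \<ge> -\<alpha> M \<delta> exp(M K \<delta>) m > -m\<close>.
\<close>

lemma birth_rate_nonneg_step:
  assumes u0: "u0 \<in> L1p" and b: "birth_rate u0 b" and "0 < \<delta>"
    and bound: "\<And>s. s \<in> {0..T} \<Longrightarrow> \<bar>b s\<bar> \<le> K"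
    and small: "\<alpha> * M * \<delta> * exp (M * K * \<delta>) < 1"
    and before: "\<And>s. 0 < s \<Longrightarrow> s \<le> T - \<delta> \<Longrightarrow> 0 \<le> b s"
    and s: "s \<in> {0..T}"
  shows "0 \<le> b s"
proof (rule ccontr)
  assume "\<not> 0 \<le> b s"
  have "continuous_on {0..T} (\<lambda>y. - b y)"
    using b unfolding birth_rate_def by (auto intro: continuous_intros continuous_on_subset)
  then obtain t1 where t1: "t1 \<in> {0..T}" and t1_max: "\<And>y. y \<in> {0..T} \<Longrightarrow> - b y \<le> - b t1"
    using continuous_attains_sup[of "{0..T}" "\<lambda>y. - b y"] s by auto
  define m where "m = - b t1"
  have m_pos: "0 < m" and "m \<le> K"
    using t1_max[OF s] \<open>\<not> 0 \<le> b s\<close> bound[OF t1] by (auto simp: m_def)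
  have "- (M * m * \<delta>) \<le> renewal_term b t1"
    using before t1 t1_max m_pos \<open>0 < \<delta>\<close> by (intro renewal_term_lower_bound) (auto simp: m_def)
  then have "- (M * m * \<delta>) \<le> initial_term u0 t1 + renewal_term b t1"
    using initial_term_nonneg[OF u0, of t1] t1 by simp
  then have "- (M * m * \<delta>) * exp (M * m * \<delta>) \<le> fnl (initial_term u0 t1 + renewal_term b t1)"
    using m_pos M_nonneg \<open>0 < \<delta>\<close> by (intro fnl_lower_bound) auto
  then have "\<alpha> * (- (M * m * \<delta>) * exp (M * m * \<delta>)) \<le> - m"
    using b t1 alpha_pos unfolding birth_rate_def m_def by (auto intro: mult_left_mono)
  then have "m \<le> \<alpha> * M * \<delta> * exp (M * m * \<delta>) * m"
    by (simp add: algebra_simps)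
  also have "\<dots> \<le> \<alpha> * M * \<delta> * exp (M * K * \<delta>) * m"
    using \<open>m \<le> K\<close> m_pos M_nonneg alpha_pos \<open>0 < \<delta>\<close>
    by (intro mult_right_mono mult_left_mono) (auto intro: mult_right_mono mult_left_mono)
  also have "\<dots> < m"
    using small m_pos by simp
  finally show False by simp
qed

lemma birth_rate_nonneg:
  assumes u0: "u0 \<in> L1p" and b: "birth_rate u0 b" and "0 \<le> t"
  shows "0 \<le> b t"
proof -
  have "compact (b ` {0..t})"
    using b unfolding birth_rate_def
    by (intro compact_continuous_image) (auto intro: continuous_on_subset)
  then obtain K where K: "\<And>s. s \<in> {0..t} \<Longrightarrow> \<bar>b s\<bar> \<le> K"
    by (meson bounded_real compact_imp_bounded imageI)
  have "((\<lambda>\<delta>. \<alpha> * M * \<delta> * exp (M * K * \<delta>)) \<longlongrightarrow> \<alpha> * M * 0 * exp (M * K * 0)) (at_right 0)"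
    by (intro tendsto_intros)
  then have "\<forall>\<^sub>F \<delta> in at_right 0. \<alpha> * M * \<delta> * exp (M * K * \<delta>) < 1 \<and> 0 < \<delta>"
    by (intro eventually_conj order_tendstoD(2) eventually_at_right_less) auto
  then obtain \<delta> where \<delta>: "\<alpha> * M * \<delta> * exp (M * K * \<delta>) < 1" "0 < \<delta>"
    using eventually_happens' trivial_limit_at_right_real by blast
  have "\<forall>s\<in>{0..min t (real n * \<delta>)}. 0 \<le> b s" for n
  proof (induction n)
    case 0
    show ?case
      using birth_rate_nonneg_step[OF u0 b \<delta>(2) _ \<delta>(1), of 0] K \<open>0 \<le> t\<close> \<delta>(2) by auto
  next
    case (Suc n)
    have before: "0 \<le> b s" if "0 < s" "s \<le> min t (real (Suc n) * \<delta>) - \<delta>" for s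
      using Suc.IH that \<delta>(2) by (auto simp: algebra_simps)
    show ?case
      using birth_rate_nonneg_step[where T="min t (real (Suc n) * \<delta>)", OF u0 b \<delta>(2) _ \<delta>(1) before] K
      by auto
  qed
  moreover obtain n :: nat where "t / \<delta> \<le> n"
    using real_arch_simple by blast
  then have "t \<le> real n * \<delta>"
    using \<delta>(2) by (simp add: field_simps)
  ultimately show ?thesis
    using \<open>0 \<le> t\<close> by auto
qed

lemma renewal_term_bounds:
  assumes u0: "u0 \<in> L1p" and b: "birth_rate u0 b"
  shows "0 \<le> renewal_term b s" "renewal_term b s \<le> \<alpha>"
proof -
  have pointwise: "0 \<le> birth_kernel a * (indicator {0<..} (s - a) * b (s - a)) \<and>
                   birth_kernel a * (indicator {0<..} (s - a) * b (s - a)) \<le> \<alpha> * birth_kernel a" for a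
    using birth_rate_nonneg[OF u0 b, of "s - a"] birth_rate_le[OF b, of "s - a"]
      birth_kernel_nonneg[of a] alpha_pos
    by (auto simp: indicator_def mult.commute[of \<alpha>] intro: mult_left_mono)
  show "0 \<le> renewal_term b s"
    unfolding renewal_term_convolution using pointwise by (intro integral_nonneg_AE) auto
  have "renewal_term b s \<le> (\<integral>a. \<alpha> * birth_kernel a \<partial>lborel)"
    unfolding renewal_term_convolution
    by (rule integral_mono') (use pointwise integrable_birth_kernel order_trans in auto)
  also have "\<dots> = \<alpha>"
    by (simp add: integral_birth_kernel)
  finally show "renewal_term b s \<le> \<alpha>" .
qed

lemma renewal_term_translation:
  assumes u0: "u0 \<in> L1p" and b: "birth_rate u0 b"
  shows "\<bar>renewal_term b s' - renewal_term b s\<bar> \<le> \<alpha> * L1_translation_dist birth_kernel (s' - s)"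
proof -
  have "(\<lambda>x. indicator {0<..} x *\<^sub>R b x) \<in> borel_measurable borel"
    using b unfolding birth_rate_def
    by (intro borel_measurable_continuous_on_indicator) (auto intro: continuous_on_subset)
  then have meas: "(\<lambda>x. indicator {0<..} x * b x) \<in> borel_measurable lborel"
    by simp
  have bound: "\<bar>indicator {0<..} x * b x\<bar> \<le> \<alpha>" for x
    using birth_rate_nonneg[OF u0 b, of x] birth_rate_le[OF b, of x] alpha_pos
    by (auto simp: indicator_def)
  show ?thesis
    using convolution_translation_bound[OF integrable_birth_kernel meas bound, of s' s]
    by (simp add: renewal_term_convolution)
qed

lemma birth_rate_equicontinuous:
  assumes u0: "u0 \<in> L1p" and b: "birth_rate u0 b" and "0 \<le> s" "0 \<le> s'"
  shows "\<bar>b s' - b s\<bar> \<le> \<alpha> * (initial_term u0 s' + initial_term u0 s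
                                + \<alpha> * L1_translation_dist birth_kernel (s' - s))"
proof -
  define x where "x = initial_term u0 s + renewal_term b s"
  define x' where "x' = initial_term u0 s' + renewal_term b s'"
  have I: "0 \<le> initial_term u0 s" "0 \<le> initial_term u0 s'"
    using initial_term_nonneg[OF u0] assms(3,4) by auto
  have "x \<ge> 0" "x' \<ge> 0"
    using I renewal_term_bounds[OF u0 b] by (auto simp: x_def x'_def)
  have "\<bar>b s' - b s\<bar> = \<alpha> * \<bar>fnl x' - fnl x\<bar>"
    using b assms(3,4) alpha_pos
    by (simp add: birth_rate_def x_def x'_def abs_mult flip: right_diff_distrib)
  also have "\<dots> \<le> \<alpha> * \<bar>x' - x\<bar>"
    using fnl_lipschitz[OF \<open>x' \<ge> 0\<close> \<open>x \<ge> 0\<close>] alpha_pos by simp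
  also have "\<dots> \<le> \<alpha> * (initial_term u0 s' + initial_term u0 s
                      + \<alpha> * L1_translation_dist birth_kernel (s' - s))"
    using renewal_term_translation[OF u0 b, of s' s] I alpha_pos
    by (intro mult_left_mono) (auto simp: x_def x'_def)
  finally show ?thesis .
qed

lemma initial_term_le_exp:
  assumes u0: "u0 \<in> L1p" and R: "L1norm u0 \<le> R" and "0 \<le> s" "c \<le> s"
  shows "initial_term u0 s \<le> M * exp (- \<mu> * c) * R"
proof -
  have "initial_term u0 s \<le> M * exp (- \<mu> * s) * L1norm u0"
    using initial_term_le[OF u0 \<open>0 \<le> s\<close>] .
  also have "\<dots> \<le> M * exp (- \<mu> * c) * R"
    using mu_pos \<open>c \<le> s\<close> M_nonneg R L1norm_nonneg[of u0]
    by (intro mult_mono) auto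
  finally show ?thesis .
qed

lemma birth_rate_grid_error:
  assumes u0: "u0 \<in> L1p" and b: "birth_rate u0 b" and R: "L1norm u0 \<le> R"
    and "0 < a" "real j * h \<le> a" "a < real j * h + h" "a < t" "a \<le> c"
    and \<epsilon>: "\<And>d. \<bar>d\<bar> < h \<Longrightarrow> L1_translation_dist birth_kernel d \<le> \<epsilon>" and "0 < \<eta>"
  shows "\<bar>b (t - a) - \<eta> * real (nat \<lfloor>b (t - real j * h) / \<eta>\<rfloor>)\<bar>
           \<le> 2 * \<alpha> * M * exp (- \<mu> * (t - c)) * R + \<alpha> * \<alpha> * \<epsilon> + \<eta>"
proof -
  let ?s = "t - real j * h" and ?E = "M * exp (- \<mu> * (t - c)) * R"
  have "0 \<le> ?s" "0 \<le> t - a"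
    using assms(4-7) by auto
  have I: "initial_term u0 (t - a) \<le> ?E" "initial_term u0 ?s \<le> ?E"
    using initial_term_le_exp[OF u0 R] assms(4-8) by auto
  have K: "L1_translation_dist birth_kernel ((t - a) - ?s) \<le> \<epsilon>"
    using assms(5,6) by (intro \<epsilon>) auto
  have "\<bar>b (t - a) - b ?s\<bar>
      \<le> \<alpha> * (initial_term u0 (t - a) + initial_term u0 ?s
               + \<alpha> * L1_translation_dist birth_kernel ((t - a) - ?s))"
    using birth_rate_equicontinuous[OF u0 b \<open>0 \<le> ?s\<close> \<open>0 \<le> t - a\<close>] .
  also have "\<dots> \<le> \<alpha> * (?E + ?E + \<alpha> * \<epsilon>)"
    using I K alpha_pos by (intro mult_left_mono add_mono) auto
  also have "\<dots> = 2 * \<alpha> * M * exp (- \<mu> * (t - c)) * R + \<alpha> * \<alpha> * \<epsilon>"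
    by (simp add: algebra_simps)
  finally have "\<bar>b (t - a) - b ?s\<bar> \<le> 2 * \<alpha> * M * exp (- \<mu> * (t - c)) * R + \<alpha> * \<alpha> * \<epsilon>" .
  moreover have "\<bar>b ?s - \<eta> * real (nat \<lfloor>b ?s / \<eta>\<rfloor>)\<bar> \<le> \<eta>"
    using quantization_error[OF \<open>0 < \<eta>\<close> birth_rate_nonneg[OF u0 b \<open>0 \<le> ?s\<close>]] .
  moreover have "\<bar>b (t - a) - \<eta> * real (nat \<lfloor>b ?s / \<eta>\<rfloor>)\<bar>
      \<le> \<bar>b (t - a) - b ?s\<bar> + \<bar>b ?s - \<eta> * real (nat \<lfloor>b ?s / \<eta>\<rfloor>)\<bar>"
    using abs_triangle_ineq[of "b (t - a) - b ?s" "b ?s - \<eta> * real (nat \<lfloor>b ?s / \<eta>\<rfloor>)"] by simp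
  ultimately show ?thesis
    by linarith
qed

section \<open>Finite nets for the semiflow\<close>

text \<open>
  On \<open>[j h, (j + 1) h) \<inter> (0, c)\<close> the profile equals \<open>exp(-\<mu> a) \<eta> v j\<close>; with \<open>\<eta> v j\<close> the
  quantized value of \<open>b(t - j h)\<close> it approximates \<open>U(t)u\<^sub>0\<close> on \<open>(0, c)\<close>.
\<close>

definition grid_profile :: "real \<Rightarrow> real \<Rightarrow> real \<Rightarrow> (nat \<Rightarrow> nat) \<Rightarrow> real \<Rightarrow> real" where
  "grid_profile c h \<eta> v a = indicator {0<..<c} a * exp (- \<mu> * a) * (\<eta> * real (v (nat \<lfloor>a / h\<rfloor>)))"

lemma grid_profile_L1p:
  assumes "0 < h" "0 \<le> \<eta>" "0 \<le> c" "c \<le> real N * h" and v: "v \<in> {..<N} \<rightarrow> {..P}"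
  shows "grid_profile c h \<eta> v \<in> L1p"
proof -
  have bound: "0 \<le> grid_profile c h \<eta> v a \<and> grid_profile c h \<eta> v a \<le> \<eta> * real P * indicator {0<..<c} a"
    for a
  proof (cases "a \<in> {0<..<c}")
    case True
    then have "nat \<lfloor>a / h\<rfloor> < N"
      using grid_index_bounds(3)[OF \<open>0 < h\<close>, of a N] \<open>c \<le> real N * h\<close> by auto
    then have "v (nat \<lfloor>a / h\<rfloor>) \<le> P"
      using v by auto
    then have v_le: "\<eta> * real (v (nat \<lfloor>a / h\<rfloor>)) \<le> \<eta> * real P"
      using \<open>0 \<le> \<eta>\<close> by (intro mult_left_mono) auto
    have exp_le: "exp (- \<mu> * a) \<le> 1"
      using True mu_pos by (simp add: exp_le_one_iff)
    have "exp (- \<mu> * a) * (\<eta> * real (v (nat \<lfloor>a / h\<rfloor>))) \<le> 1 * (\<eta> * real P)"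
      by (rule mult_mono[OF exp_le v_le]) (use \<open>0 \<le> \<eta>\<close> in auto)
    then show ?thesis
      using True \<open>0 \<le> \<eta>\<close> by (simp add: grid_profile_def)
  qed (simp add: grid_profile_def)
  have dominated: "norm (indicator {0<..} a *\<^sub>R grid_profile c h \<eta> v a)
                     \<le> norm (\<eta> * real P * indicator {0<..<c} a)" for a
  proof -
    have "norm (indicator {0<..} a *\<^sub>R grid_profile c h \<eta> v a) \<le> grid_profile c h \<eta> v a"
      using bound[of a] by (simp add: indicator_def)
    also have "\<dots> \<le> norm (\<eta> * real P * indicator {0<..<c} a)"
      using bound[of a] by simp
    finally show ?thesis .
  qed
  have "integrable lborel (\<lambda>a. \<eta> * real P * indicator {0<..<c} a :: real)"
    using \<open>0 \<le> c\<close> by (intro integrable_mult_right integrable_real_indicator) auto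
  moreover have "(\<lambda>a. indicator {0<..} a *\<^sub>R grid_profile c h \<eta> v a) \<in> borel_measurable lborel"
    unfolding grid_profile_def by measurable
  ultimately have "integrable lborel (\<lambda>a. indicator {0<..} a *\<^sub>R grid_profile c h \<eta> v a)"
    using dominated by (rule Bochner_Integration.integrable_bound[OF _ _ AE_I2])
  then show ?thesis
    using bound by (simp add: L1p_def set_integrable_def)
qed

context
  fixes u0 b Ut :: "real \<Rightarrow> real" and R t c h \<epsilon> \<eta> :: real and N :: nat and v :: "nat \<Rightarrow> nat"
  assumes u0: "u0 \<in> L1p" and b: "birth_rate u0 b" and R: "L1norm u0 \<le> R"
    and Ut: "\<And>a. 0 < a \<Longrightarrow>
               Ut a = (if t \<le> a then exp (- \<mu> * t) * u0 (a - t) else exp (- \<mu> * a) * b (t - a))"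
    and h: "0 < h" and c: "0 \<le> c" "c < t" "c \<le> real N * h"
    and \<epsilon>: "\<And>d. \<bar>d\<bar> < h \<Longrightarrow> L1_translation_dist birth_kernel d \<le> \<epsilon>" and \<eta>: "0 < \<eta>"
    and v: "\<And>j. j < N \<Longrightarrow> v j = nat \<lfloor>b (t - real j * h) / \<eta>\<rfloor>"
begin

lemma grid_error_nonneg: "0 \<le> 2 * \<alpha> * M * exp (- \<mu> * (t - c)) * R + \<alpha> * \<alpha> * \<epsilon> + \<eta>"
proof -
  have "0 \<le> R"
    using R L1norm_nonneg[of u0] by linarith
  moreover have "0 \<le> \<epsilon>"
    using \<epsilon>[of 0] h L1_translation_dist_nonneg[of birth_kernel 0] by simp
  ultimately show ?thesis
    using alpha_pos M_nonneg \<eta> by (intro add_nonneg_nonneg) auto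
qed

lemma semiflow_grid_profile_dist_pointwise:
  assumes "0 < a" "a \<noteq> t"
  shows "\<bar>Ut a - grid_profile c h \<eta> v a\<bar>
           \<le> exp (- \<mu> * t) * (indicator {0<..} (a - t) * \<bar>u0 (a - t)\<bar>)
             + \<alpha> * (indicator {c..} a * exp (- \<mu> * a))
             + (2 * \<alpha> * M * exp (- \<mu> * (t - c)) * R + \<alpha> * \<alpha> * \<epsilon> + \<eta>) * indicator {0<..<c} a"
    (is "_ \<le> ?initial + _ + ?D * _")
proof -
  have "0 \<le> ?D"
    by (rule grid_error_nonneg)
  have "0 \<le> ?initial"
    by simp
  consider "a < c" | "c \<le> a" "a < t" | "t < a"
    using \<open>a \<noteq> t\<close> by linarith
  then show ?thesis
  proof cases
    case 1
    define j where "j = nat \<lfloor>a / h\<rfloor>"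
    have "0 \<le> a" "a < real N * h"
      using 1 \<open>0 < a\<close> c by auto
    then have j: "real j * h \<le> a" "a < real j * h + h" "j < N"
      unfolding j_def using grid_index_bounds[OF h] by blast+
    have "\<bar>Ut a - grid_profile c h \<eta> v a\<bar>
        = exp (- \<mu> * a) * \<bar>b (t - a) - \<eta> * real (nat \<lfloor>b (t - real j * h) / \<eta>\<rfloor>)\<bar>"
      using 1 \<open>0 < a\<close> c Ut[of a] v[OF j(3)]
      by (simp add: grid_profile_def j_def abs_mult flip: right_diff_distrib)
    also have "\<dots> \<le> 1 * ?D"
      using 1 \<open>0 < a\<close> mu_pos c \<eta>
      by (intro mult_mono birth_rate_grid_error[OF u0 b R _ j(1,2) _ _ \<epsilon>]) auto
    finally show ?thesis
      using 1 \<open>0 < a\<close> \<open>0 \<le> ?initial\<close> by (simp add: add_increasing)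
  next
    case 2
    have "\<bar>Ut a - grid_profile c h \<eta> v a\<bar> = exp (- \<mu> * a) * b (t - a)"
      using 2 \<open>0 < a\<close> Ut[of a] birth_rate_nonneg[OF u0 b, of "t - a"]
      by (simp add: grid_profile_def abs_mult)
    also have "\<dots> \<le> \<alpha> * exp (- \<mu> * a)"
      using 2 birth_rate_le[OF b, of "t - a"] by (simp add: mult.commute)
    finally show ?thesis
      using 2 \<open>0 \<le> ?initial\<close> \<open>0 \<le> ?D\<close> by simp
  next
    case 3
    then show ?thesis
      using \<open>0 < a\<close> c Ut[of a] L1p_nonneg[OF u0, of "a - t"] alpha_pos
      by (simp add: grid_profile_def abs_mult)
  qed
qed

lemma L1dist_semiflow_grid_profile:
  "L1dist Ut (grid_profile c h \<eta> v)
     \<le> exp (- \<mu> * t) * R + \<alpha> * exp (- \<mu> * c) / \<mu>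
       + (2 * \<alpha> * M * exp (- \<mu> * (t - c)) * R + \<alpha> * \<alpha> * \<epsilon> + \<eta>) * c"
proof -
  define D where "D = 2 * \<alpha> * M * exp (- \<mu> * (t - c)) * R + \<alpha> * \<alpha> * \<epsilon> + \<eta>"
  define w where "w x = indicator {0<..} x * \<bar>u0 x\<bar>" for x
  define G where
    "G a = exp (- \<mu> * t) * w (a - t) + \<alpha> * (indicator {c..} a * exp (- \<mu> * a)) + D * indicator {0<..<c} a"
    for a
  have G_nonneg: "0 \<le> G a" for a
    unfolding G_def w_def D_def using grid_error_nonneg alpha_pos by (intro add_nonneg_nonneg) auto
  have w_int: "integrable lborel (\<lambda>a. w (a - t))"
    using integrable_translate[OF L1p_integrable_abs[OF u0], of "- t"] by (simp add: w_def)
  have exp_int: "integrable lborel (\<lambda>a. indicator {c..} a * exp (- \<mu> * a))"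
    using exp_minus_set_integrable_atLeast(1)[OF mu_pos, of c] by (simp add: set_integrable_def)
  have ind_int: "integrable lborel (\<lambda>a. indicator {0<..<c} a :: real)"
    using c by (intro integrable_real_indicator) auto
  have "L1dist Ut (grid_profile c h \<eta> v) \<le> (\<integral>a. G a \<partial>lborel)"
    unfolding L1dist_def set_lebesgue_integral_def
  proof (rule integral_mono_AE')
    show "integrable lborel G"
      unfolding G_def using w_int exp_int ind_int
      by (intro Bochner_Integration.integrable_add integrable_mult_right)
    show "AE a in lborel. indicator {0<..} a *\<^sub>R \<bar>Ut a - grid_profile c h \<eta> v a\<bar> \<le> G a"
      using AE_lborel_singleton[of t]
    proof eventually_elim
      case (elim a)
      show ?case
      proof (cases "0 < a")
        case True
        then show ?thesis
          using semiflow_grid_profile_dist_pointwise[OF True elim] by (simp add: G_def w_def D_def)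
      qed (use G_nonneg[of a] in simp)
    qed
  qed (use G_nonneg in auto)
  also have "(\<integral>a. G a \<partial>lborel) = exp (- \<mu> * t) * L1norm u0 + \<alpha> * exp (- \<mu> * c) / \<mu> + D * c"
  proof -
    have "(\<integral>a. w (a - t) \<partial>lborel) = L1norm u0"
      using integral_translate[of w "- t"] by (simp add: w_def L1norm_eq_integral)
    moreover have "(\<integral>a. indicator {c..} a * exp (- \<mu> * a) \<partial>lborel) = exp (- \<mu> * c) / \<mu>"
      using exp_minus_set_integrable_atLeast(2)[OF mu_pos, of c] by (simp add: set_lebesgue_integral_def)
    moreover have "(\<integral>a. indicator {0<..<c} a \<partial>lborel) = c"
      using c by simp
    ultimately show ?thesis
      unfolding G_def using w_int exp_int ind_int
      by (simp add: Bochner_Integration.integral_add integrable_mult_right)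
  qed
  also have "\<dots> \<le> exp (- \<mu> * t) * R + \<alpha> * exp (- \<mu> * c) / \<mu> + D * c"
    using R by simp
  finally show ?thesis
    unfolding D_def .
qed

end

lemma kuratowski_semiflow_le:
  assumes U: "is_semiflow \<mu> \<alpha> \<beta> U" and B: "B \<subseteq> L1p"
    and R: "\<And>u. u \<in> B \<Longrightarrow> L1norm u \<le> R" "0 \<le> R"
    and "0 < h" "0 < c" "c \<le> real N * h" "real N * h < t"
    and \<epsilon>: "\<And>d. \<bar>d\<bar> < h \<Longrightarrow> L1_translation_dist birth_kernel d \<le> \<epsilon>" and "0 < \<eta>"
  shows "kuratowski (U t ` B)
           \<le> ereal (exp (- \<mu> * t) * R + \<alpha> * exp (- \<mu> * c) / \<mu>
                    + (2 * \<alpha> * M * exp (- \<mu> * (t - c)) * R + \<alpha> * \<alpha> * \<epsilon> + \<eta>) * c)"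
    (is "_ \<le> ereal ?r")
proof -
  define P where "P = nat \<lceil>\<alpha> / \<eta>\<rceil>"
  define C where "C = grid_profile c h \<eta> ` (\<Pi>\<^sub>E j\<in>{..<N}. {..P})"
  show ?thesis
  proof (rule kuratowski_le_cover)
    have "0 \<le> \<epsilon>"
      using \<epsilon>[of 0] \<open>0 < h\<close> L1_translation_dist_nonneg[of birth_kernel 0] by simp
    then have "0 \<le> exp (- \<mu> * t) * R + (2 * \<alpha> * M * exp (- \<mu> * (t - c)) * R + \<alpha> * \<alpha> * \<epsilon> + \<eta>) * c"
      using R(2) alpha_pos M_nonneg \<open>0 < c\<close> \<open>0 < \<eta>\<close> by (intro add_nonneg_nonneg mult_nonneg_nonneg) auto
    moreover have "0 < \<alpha> * exp (- \<mu> * c) / \<mu>"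
      using alpha_pos mu_pos by simp
    ultimately show "0 < ?r"
      by linarith
    show "finite C"
      unfolding C_def by (intro finite_imageI finite_PiE) auto
    show "C \<subseteq> L1p"
    proof
      fix g assume "g \<in> C"
      then obtain v where "v \<in> (\<Pi>\<^sub>E j\<in>{..<N}. {..P})" and g: "g = grid_profile c h \<eta> v"
        unfolding C_def by blast
      then have "v \<in> {..<N} \<rightarrow> {..P}"
        by (simp add: PiE_iff)
      then show "g \<in> L1p"
        unfolding g using \<open>0 < h\<close> \<open>0 < \<eta>\<close> \<open>0 < c\<close> \<open>c \<le> real N * h\<close> by (intro grid_profile_L1p) auto
    qed
  next
    fix u assume "u \<in> U t ` B"
    then obtain u0 where "u0 \<in> B" and u: "u = U t u0"
      by auto
    then have u0: "u0 \<in> L1p"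
      using B by auto
    obtain b where b: "birth_rate u0 b"
      and U_eq: "\<And>s a. 0 \<le> s \<Longrightarrow> 0 < a \<Longrightarrow>
                 U s u0 a = (if s \<le> a then exp (- \<mu> * s) * u0 (a - s) else exp (- \<mu> * a) * b (s - a))"
      using is_semiflowE[OF U u0] by blast
    have Ut: "U t u0 a = (if t \<le> a then exp (- \<mu> * t) * u0 (a - t) else exp (- \<mu> * a) * b (t - a))"
      if "0 < a" for a
      using \<open>0 < c\<close> \<open>c \<le> real N * h\<close> \<open>real N * h < t\<close> that by (intro U_eq) auto
    define v where "v = restrict (\<lambda>j. nat \<lfloor>b (t - real j * h) / \<eta>\<rfloor>) {..<N}"
    have "0 \<le> t - real j * h" if "j < N" for j
    proof -
      have "real j * h \<le> real N * h"
        using that \<open>0 < h\<close> by (intro mult_right_mono) auto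
      then show ?thesis
        using \<open>real N * h < t\<close> by linarith
    qed
    then have "v \<in> (\<Pi>\<^sub>E j\<in>{..<N}. {..P})"
      unfolding v_def P_def using quantization_le[OF \<open>0 < \<eta>\<close> birth_rate_le[OF b]] by auto
    moreover have "L1dist u (grid_profile c h \<eta> v) \<le> ?r"
      unfolding u using L1dist_semiflow_grid_profile[OF u0 b R(1)[OF \<open>u0 \<in> B\<close>] Ut \<open>0 < h\<close> _ _
          \<open>c \<le> real N * h\<close> \<epsilon> \<open>0 < \<eta>\<close>] \<open>0 < c\<close> \<open>c \<le> real N * h\<close> \<open>real N * h < t\<close>
      by (simp add: v_def)
    ultimately show "\<exists>g\<in>C. L1dist u g \<le> ?r"
      unfolding C_def by blast
  qed
qed

lemma eventually_kuratowski_semiflow_le: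
  assumes U: "is_semiflow \<mu> \<alpha> \<beta> U" and B: "B \<subseteq> L1p" and R: "\<And>u. u \<in> B \<Longrightarrow> L1norm u \<le> R"
    and "0 < r"
  shows "\<forall>\<^sub>F t in at_top. kuratowski (U t ` B) \<le> ereal r"
proof -
  define R' where "R' = max R 0"
  have R': "\<And>u. u \<in> B \<Longrightarrow> L1norm u \<le> R'" "0 \<le> R'"
    using R by (auto simp: R'_def le_max_iff_disj)
  have "((\<lambda>c. \<alpha> * exp (- \<mu> * c) / \<mu>) \<longlongrightarrow> \<alpha> * 0 / \<mu>) at_top"
    using mu_pos by (intro tendsto_intros tendsto_exp_neg_mult_at_top) auto
  then have "\<forall>\<^sub>F c in at_top. \<alpha> * exp (- \<mu> * c) / \<mu> < r / 4"
    using \<open>0 < r\<close> by (auto dest: order_tendstoD(2)[where a="r / 4"])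
  then have "\<forall>\<^sub>F c in at_top. \<alpha> * exp (- \<mu> * c) / \<mu> < r / 4 \<and> 0 < c"
    using eventually_gt_at_top[of 0] by eventually_elim auto
  then obtain c where c: "\<alpha> * exp (- \<mu> * c) / \<mu> < r / 4" "0 < c"
    using eventually_happens'[OF trivial_limit_at_top_linorder] by blast
  \<comment> \<open>error budget: \<open>r/4\<close> beyond age \<open>c\<close>, \<open>r/8\<close> each for \<open>\<alpha>\<^sup>2 \<epsilon> c\<close> and \<open>\<eta> c\<close>, \<open>r/4\<close> for the decaying terms\<close>
  define \<epsilon> where "\<epsilon> = r / (8 * \<alpha> * \<alpha> * c)"
  define \<eta> where "\<eta> = r / (8 * c)"
  have "0 < \<epsilon>" "0 < \<eta>"
    using \<open>0 < r\<close> c(2) alpha_pos by (simp_all add: \<epsilon>_def \<eta>_def)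
  obtain \<delta> where "0 < \<delta>" and \<delta>: "\<And>d. \<bar>d\<bar> < \<delta> \<Longrightarrow> L1_translation_dist birth_kernel d \<le> \<epsilon>"
    using L1_translation_dist_le_small[OF integrable_birth_kernel \<open>0 < \<epsilon>\<close>] by blast
  obtain N h where "0 < h" "h \<le> \<delta>" "c = real N * h"
    using uniform_grid[OF c(2) \<open>0 < \<delta>\<close>] by blast
  have \<epsilon>_h: "L1_translation_dist birth_kernel d \<le> \<epsilon>" if "\<bar>d\<bar> < h" for d
    using \<delta> \<open>h \<le> \<delta>\<close> that by simp
  have "((\<lambda>t. exp (- \<mu> * t) * (R' + 2 * \<alpha> * M * exp (\<mu> * c) * R' * c)) \<longlongrightarrow>
          0 * (R' + 2 * \<alpha> * M * exp (\<mu> * c) * R' * c)) at_top"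
    by (intro tendsto_intros tendsto_exp_neg_mult_at_top mu_pos)
  then have "\<forall>\<^sub>F t in at_top. exp (- \<mu> * t) * (R' + 2 * \<alpha> * M * exp (\<mu> * c) * R' * c) < r / 4"
    using \<open>0 < r\<close> by (intro order_tendstoD(2)) auto
  then show ?thesis
    using eventually_gt_at_top[of "real N * h"]
  proof eventually_elim
    case (elim t)
    have "exp (- \<mu> * (t - c)) = exp (- \<mu> * t) * exp (\<mu> * c)"
      by (simp add: algebra_simps flip: exp_add)
    then have tail: "exp (- \<mu> * t) * R' + 2 * \<alpha> * M * exp (- \<mu> * (t - c)) * R' * c < r / 4"
      using elim(1) by (simp add: algebra_simps)
    have "kuratowski (U t ` B)
        \<le> ereal (exp (- \<mu> * t) * R' + \<alpha> * exp (- \<mu> * c) / \<mu>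
                 + (2 * \<alpha> * M * exp (- \<mu> * (t - c)) * R' + \<alpha> * \<alpha> * \<epsilon> + \<eta>) * c)"
      using \<open>c = real N * h\<close> elim(2)
      by (intro kuratowski_semiflow_le[OF U B R' \<open>0 < h\<close> c(2) _ _ \<epsilon>_h \<open>0 < \<eta>\<close>]) auto
    also have "\<dots> \<le> ereal r"
    proof -
      have "\<alpha> * \<alpha> * \<epsilon> * c = r / 8" "\<eta> * c = r / 8"
        using c(2) alpha_pos by (simp_all add: \<epsilon>_def \<eta>_def)
      moreover have "(2 * \<alpha> * M * exp (- \<mu> * (t - c)) * R' + \<alpha> * \<alpha> * \<epsilon> + \<eta>) * c
          = 2 * \<alpha> * M * exp (- \<mu> * (t - c)) * R' * c + \<alpha> * \<alpha> * \<epsilon> * c + \<eta> * c"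
        by (simp add: algebra_simps)
      ultimately have "exp (- \<mu> * t) * R' + \<alpha> * exp (- \<mu> * c) / \<mu>
          + (2 * \<alpha> * M * exp (- \<mu> * (t - c)) * R' + \<alpha> * \<alpha> * \<epsilon> + \<eta>) * c \<le> r"
        using tail c(1) \<open>0 < r\<close> by linarith
      then show ?thesis
        by simp
    qed
    finally show ?case .
  qed
qed

end

theorem theorem4p2:
  fixes \<mu> \<alpha> :: real and \<beta> :: "real \<Rightarrow> real"
    and U :: "real \<Rightarrow> (real \<Rightarrow> real) \<Rightarrow> (real \<Rightarrow> real)"
  assumes "\<mu> > 0" and "\<alpha> > 0"
    and "\<beta> \<in> borel_measurable lborel"
    and "\<exists>M. \<forall>a>0. 0 \<le> \<beta> a \<and> \<beta> a \<le> M"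
    and "(LINT a:{0<..}|lborel. \<beta> a * exp (- \<mu> * a)) = 1"
    and "is_semiflow \<mu> \<alpha> \<beta> U"
  shows "\<forall>B. B \<subseteq> L1p \<and> (\<exists>R. \<forall>u\<in>B. L1norm u \<le> R) \<longrightarrow>
           ((\<lambda>t. kuratowski (U t ` B)) \<longlongrightarrow> 0) at_top"
proof -
  obtain M where "\<forall>a>0. 0 \<le> \<beta> a \<and> \<beta> a \<le> M"
    using assms(4) by blast
  then interpret renewal_model \<mu> \<alpha> \<beta> M
    using assms(1-3,5) by unfold_locales auto
  show ?thesis
  proof (intro allI impI)
    fix B assume "B \<subseteq> L1p \<and> (\<exists>R. \<forall>u\<in>B. L1norm u \<le> R)"
    then obtain R where "B \<subseteq> L1p" "\<And>u. u \<in> B \<Longrightarrow> L1norm u \<le> R"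
      by blast
    then show "((\<lambda>t. kuratowski (U t ` B)) \<longlongrightarrow> 0) at_top"
      by (intro tendsto_kuratowski_zero eventually_kuratowski_semiflow_le[OF assms(6)])
  qed
qed

end
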